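(* Let $w=\mu^{\omega}(a)$ where $\mu$ is an injective $r$-uniform morphism ($r\ge2$) on a finite alphabet, prolongable on the letter $a$. If $w$ is periodic, then no letter appears twice in the minimal repeating unit of $w$ (the shortest word $t$ with $w=t^{\omega}$).
   Context: A morphism $\mu$ satisfies $\mu(uv)=\mu(u)\mu(v)$ for finite $u$; it is $r$-uniform if $|\mu(b)|=r$ for all letters $b$; prolongable on $a$ means $\mu(a)$ begins with $a$, and $\mu^{\omega}(a)$ is the infinite word having every $\mu^n(a)$ as a prefix. *)

theory Defs
  imports Main
begin

definition morph :: "('a \<Rightarrow> 'a list) \<Rightarrow> 'a list \<Rightarrow> 'a list" where
  "morph \<mu> u = concat (map \<mu> u)"

text \<open>The infinite word t^omega, for nonempty t, as a function on positions.\<close>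
definition omega_pow :: "'a list \<Rightarrow> nat \<Rightarrow> 'a" where
  "omega_pow t i = t ! (i mod length t)"

end

theory Submission
  imports Defs "HOL-Number_Theory.Number_Theory"
begin

text \<open>
  A fixed point \<open>w\<close> of an injective \<open>r\<close>-uniform morphism is self-similar: \<open>w n = w m\<close> holds
  exactly when the length-\<open>r\<close> blocks of \<open>w\<close> at positions \<open>r n\<close> and \<open>r m\<close> agree. If \<open>w\<close> has
  minimal period \<open>p\<close>, this forces \<open>r\<close> to be coprime to \<open>p\<close>, since otherwise \<open>p / gcd r p\<close>
  would be a smaller period. Iterating the self-similarity \<open>e = \<phi>(p)\<close> times, equal letters
  \<open>w x = w y\<close> have equal blocks at \<open>r\<^sup>e x\<close> and \<open>r\<^sup>e y\<close>; as \<open>r\<^sup>e \<equiv> 1 (mod p)\<close>, the second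
  letters of these blocks are \<open>w (x + 1)\<close> and \<open>w (y + 1)\<close>. So equal letters have equal
  successors, and a repeated letter in the repeating unit would yield a period shorter than \<open>p\<close>.
\<close>

definition has_period :: "(nat \<Rightarrow> 'a) \<Rightarrow> nat \<Rightarrow> bool" where
  "has_period w q \<longleftrightarrow> (\<forall>n. w (n + q) = w n)"

definition minimal_period :: "(nat \<Rightarrow> 'a) \<Rightarrow> nat \<Rightarrow> bool" where
  "minimal_period w p \<longleftrightarrow> p > 0 \<and> has_period w p \<and> (\<forall>q > 0. has_period w q \<longrightarrow> p \<le> q)"

lemma has_period_add_mult:
  assumes "has_period w q"
  shows "w (n + k * q) = w n"
proof (induction k)
  case (Suc k)
  have "w (n + Suc k * q) = w ((n + k * q) + q)" by (simp add: algebra_simps)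
  with assms Suc show ?case by (simp add: has_period_def)
qed simp

lemma has_period_mod_eq:
  assumes "has_period w q" "n mod q = m mod q"
  shows "w n = w m"
  by (metis assms has_period_add_mult div_mult_mod_eq add.commute)

lemma has_period_omega_pow: "has_period (omega_pow t) (length t)"
  by (simp add: has_period_def omega_pow_def)

lemma omega_pow_map_upt:
  assumes "q > 0" "has_period w q"
  shows "w = omega_pow (map w [0..<q])"
proof
  fix n
  have "w n = w (n mod q)" using assms(2) by (rule has_period_mod_eq) simp
  with assms(1) show "w n = omega_pow (map w [0..<q]) n" by (simp add: omega_pow_def)
qed

lemma minimal_period_omega_pow:
  assumes "t \<noteq> []" "w = omega_pow t"
    and shortest: "\<forall>s. s \<noteq> [] \<and> w = omega_pow s \<longrightarrow> length t \<le> length s"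
  shows "minimal_period w (length t)"
  unfolding minimal_period_def
proof (intro conjI allI impI)
  show "length t > 0" using \<open>t \<noteq> []\<close> by simp
  show "has_period w (length t)" unfolding \<open>w = omega_pow t\<close> by (rule has_period_omega_pow)
next
  fix q assume "q > 0" "has_period w q"
  then have "w = omega_pow (map w [0..<q])" by (rule omega_pow_map_upt)
  moreover have "map w [0..<q] \<noteq> []" using \<open>q > 0\<close> by simp
  ultimately have "length t \<le> length (map w [0..<q])" using shortest by blast
  then show "length t \<le> q" by simp
qed

lemma inj_on_minimal_period:
  assumes "minimal_period w p"
    and successors: "\<And>x y. w x = w y \<Longrightarrow> w (Suc x) = w (Suc y)"
  shows "inj_on w {..<p}"
proof (rule ccontr)
  have per: "has_period w p" and min: "\<And>q. q > 0 \<Longrightarrow> has_period w q \<Longrightarrow> p \<le> q"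
    using assms(1) by (auto simp: minimal_period_def)
  assume "\<not> inj_on w {..<p}"
  then obtain x y where "x < p" "y < p" "x \<noteq> y" "w x = w y" unfolding inj_on_def by blast
  then obtain i j where ij: "i < j" "j < p" "w i = w j" by (metis linorder_neqE_nat)
  have shift: "w (i + m) = w (j + m)" for m
  proof (induction m)
    case (Suc m)
    then show ?case using successors[OF Suc.IH] by simp
  qed (use ij in simp)
  have "has_period w (j - i)"
    unfolding has_period_def
  proof
    fix n
    have "w (n + (j - i)) = w (n + (j - i) + 1 * p)" using per by (simp only: has_period_add_mult)
    also have "\<dots> = w (j + (n + p - i))" using ij by (simp add: algebra_simps)
    also have "\<dots> = w (i + (n + p - i))" by (simp add: shift)
    also have "\<dots> = w (n + 1 * p)" using ij by simp
    also have "\<dots> = w n" using per by (rule has_period_add_mult)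
    finally show "w (n + (j - i)) = w n" .
  qed
  with min[of "j - i"] ij show False by simp
qed

lemma length_morph:
  assumes "\<forall>b. length (\<mu> b) = r"
  shows "length (morph \<mu> u) = r * length u"
  using assms by (induction u) (auto simp: morph_def)

lemma length_morph_power:
  assumes "\<forall>b. length (\<mu> b) = r"
  shows "length ((morph \<mu> ^^ n) u) = r ^ n * length u"
  using assms by (induction n) (auto simp: length_morph)

lemma nth_morph:
  assumes "\<forall>b. length (\<mu> b) = r" "n < length u" "k < r"
  shows "morph \<mu> u ! (r * n + k) = \<mu> (u ! n) ! k"
  using assms(2)
proof (induction u arbitrary: n)
  case (Cons b u)
  show ?case
  proof (cases n)
    case (Suc m)
    have "morph \<mu> (b # u) ! (r * n + k) = morph \<mu> u ! (r * m + k)"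
      using assms(1) Suc by (simp add: morph_def nth_append)
    with Cons Suc show ?thesis by simp
  qed (use assms in \<open>simp add: morph_def nth_append\<close>)
qed simp

lemma inj_morph_imp_inj:
  assumes "inj (morph \<mu>)"
  shows "inj \<mu>"
proof (rule injI)
  fix b c assume "\<mu> b = \<mu> c"
  then have "morph \<mu> [b] = morph \<mu> [c]" by (simp add: morph_def)
  with assms show "b = c" by (auto dest: injD)
qed

lemma uniform_fixpoint_nth:
  assumes unif: "\<forall>b. length (\<mu> b) = r" and "r \<ge> 2"
    and fixpt: "\<forall>n i. i < length ((morph \<mu> ^^ n) [a]) \<longrightarrow> w i = (morph \<mu> ^^ n) [a] ! i"
    and "k < r"
  shows "w (r * n + k) = \<mu> (w n) ! k"
proof -
  have "n < 2 ^ n" by (rule less_exp)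
  also have "(2::nat) ^ n \<le> r ^ n" using \<open>r \<ge> 2\<close> by (rule power_mono) simp
  finally have n_less: "n < length ((morph \<mu> ^^ n) [a])" by (simp add: length_morph_power[OF unif])
  have "r * n + k < r * Suc n" using \<open>k < r\<close> by simp
  also have "\<dots> \<le> r * length ((morph \<mu> ^^ n) [a])" using n_less by (intro mult_le_mono2) simp
  also have "\<dots> = length ((morph \<mu> ^^ Suc n) [a])" by (simp add: length_morph[OF unif])
  finally have "w (r * n + k) = (morph \<mu> ^^ Suc n) [a] ! (r * n + k)" using fixpt by blast
  also have "\<dots> = morph \<mu> ((morph \<mu> ^^ n) [a]) ! (r * n + k)" by simp
  also have "\<dots> = \<mu> ((morph \<mu> ^^ n) [a] ! n) ! k" using unif n_less \<open>k < r\<close> by (rule nth_morph)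
  finally show ?thesis using fixpt n_less by simp
qed

lemma uniform_fixpoint_eq_iff_blocks_eq:
  assumes "inj (morph \<mu>)" and unif: "\<forall>b. length (\<mu> b) = r" and "r \<ge> 2"
    and "\<forall>n i. i < length ((morph \<mu> ^^ n) [a]) \<longrightarrow> w i = (morph \<mu> ^^ n) [a] ! i"
  shows "w n = w m \<longleftrightarrow> (\<forall>k < r. w (r * n + k) = w (r * m + k))"
proof -
  have "(\<forall>k < r. w (r * n + k) = w (r * m + k)) \<longleftrightarrow> \<mu> (w n) = \<mu> (w m)"
    using uniform_fixpoint_nth[OF unif assms(3,4)] unif by (auto intro: nth_equalityI)
  also have "\<dots> \<longleftrightarrow> w n = w m" using inj_morph_imp_inj[OF assms(1)] by (auto dest: injD)
  finally show ?thesis by simp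
qed

lemma coprime_minimal_period:
  fixes w :: "nat \<Rightarrow> 'a" and r :: nat
  assumes "minimal_period w p"
    and blocks: "\<And>n m. (\<forall>k < r. w (r * n + k) = w (r * m + k)) \<Longrightarrow> w n = w m"
  shows "coprime r p"
proof (rule ccontr)
  have "p > 0" and per: "has_period w p" and min: "\<And>q. q > 0 \<Longrightarrow> has_period w q \<Longrightarrow> p \<le> q"
    using assms(1) by (auto simp: minimal_period_def)
  assume "\<not> coprime r p"
  define d where "d = gcd r p"
  have "d \<noteq> 1" using \<open>\<not> coprime r p\<close> unfolding d_def by (metis coprime_iff_gcd_eq_1)
  moreover have "d \<noteq> 0" using \<open>p > 0\<close> by (simp add: d_def)
  ultimately have "d > 1" by simp
  obtain q where p_eq: "p = d * q" unfolding d_def by (metis gcd_dvd2 dvdE)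
  obtain s where r_eq: "r = d * s" unfolding d_def by (metis gcd_dvd1 dvdE)
  have "has_period w q"
    unfolding has_period_def
  proof
    fix n
    have "w (r * (n + q) + k) = w (r * n + k)" for k
    proof -
      have "r * (n + q) + k = (r * n + k) + s * p" by (simp add: p_eq r_eq algebra_simps)
      then show ?thesis using per by (simp only: has_period_add_mult)
    qed
    then show "w (n + q) = w n" by (intro blocks) simp
  qed
  moreover have "0 < q" "q < p" using \<open>p > 0\<close> \<open>d > 1\<close> p_eq by auto
  ultimately show False using min[of q] by simp
qed

lemma blocks_eq_power:
  fixes w :: "nat \<Rightarrow> 'a" and r :: nat
  assumes blocks: "\<And>n m. w n = w m \<Longrightarrow> \<forall>k < r. w (r * n + k) = w (r * m + k)"
    and "w x = w y" "c < r ^ N"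
  shows "w (r ^ N * x + c) = w (r ^ N * y + c)"
  using assms(3)
proof (induction N arbitrary: c)
  case (Suc N)
  then have "r > 0" by (cases "r = 0") auto
  have split: "r ^ Suc N * z + c = r * (r ^ N * z + c div r) + c mod r" for z
    by (simp add: algebra_simps)
  have "c div r < r ^ N" using Suc.prems by (simp add: less_mult_imp_div_less mult.commute)
  then have "w (r ^ N * x + c div r) = w (r ^ N * y + c div r)" by (rule Suc.IH)
  from blocks[OF this] \<open>r > 0\<close> show ?case unfolding split by simp
qed (use assms in simp)

lemma eq_imp_eq_Suc_if_coprime_period:
  fixes w :: "nat \<Rightarrow> 'a" and r :: nat
  assumes blocks: "\<And>n m. w n = w m \<Longrightarrow> \<forall>k < r. w (r * n + k) = w (r * m + k)"
    and "r \<ge> 2" "has_period w p" "coprime r p" "w x = w y"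
  shows "w (Suc x) = w (Suc y)"
proof -
  have "p > 0" using \<open>coprime r p\<close> \<open>r \<ge> 2\<close> by (cases "p = 0") auto
  define e where "e = totient p"
  have euler: "[r ^ e = 1] (mod p)" unfolding e_def using \<open>coprime r p\<close> by (rule euler_theorem)
  have "1 < r ^ e" using \<open>r \<ge> 2\<close> \<open>p > 0\<close> by (intro one_less_power) (auto simp: e_def)
  then have blocks_eq: "w (r ^ e * x + 1) = w (r ^ e * y + 1)"
    using blocks_eq_power[OF blocks \<open>w x = w y\<close>, of 1 e] by blast
  have mod_eq: "(r ^ e * z + 1) mod p = Suc z mod p" for z
    using cong_add[OF cong_mult[OF euler cong_refl[of z]] cong_refl[of 1]] by (simp add: cong_def)
  have "w (Suc x) = w (r ^ e * x + 1)" using \<open>has_period w p\<close> by (rule has_period_mod_eq) (simp only: mod_eq)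
  also note blocks_eq
  also have "w (r ^ e * y + 1) = w (Suc y)" using \<open>has_period w p\<close> by (rule has_period_mod_eq) (simp only: mod_eq)
  finally show ?thesis .
qed

theorem theorem13:
  fixes \<mu> :: "'a::finite \<Rightarrow> 'a list" and r :: nat and a :: 'a and w :: "nat \<Rightarrow> 'a"
  assumes inj: "inj (morph \<mu>)"
    and unif: "\<forall>b. length (\<mu> b) = r"
    and r2: "r \<ge> 2"
    and prol: "\<mu> a \<noteq> [] \<and> hd (\<mu> a) = a"
    and fixpt: "\<forall>n i. i < length ((morph \<mu> ^^ n) [a]) \<longrightarrow> w i = (morph \<mu> ^^ n) [a] ! i"
    and periodic: "\<exists>t. t \<noteq> [] \<and> w = omega_pow t"
  shows "\<forall>t. t \<noteq> [] \<and> w = omega_pow t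
           \<and> (\<forall>s. s \<noteq> [] \<and> w = omega_pow s \<longrightarrow> length t \<le> length s)
           \<longrightarrow> distinct t"
proof (intro allI impI)
  fix t assume t: "t \<noteq> [] \<and> w = omega_pow t
           \<and> (\<forall>s. s \<noteq> [] \<and> w = omega_pow s \<longrightarrow> length t \<le> length s)"
  define p where "p = length t"
  have min: "minimal_period w p" unfolding p_def using t by (intro minimal_period_omega_pow) auto
  note blocks = uniform_fixpoint_eq_iff_blocks_eq[OF inj unif r2 fixpt]
  have coprime: "coprime r p" using min blocks[THEN iffD2] by (rule coprime_minimal_period)
  have period: "has_period w p" using min by (simp add: minimal_period_def)
  have "w (Suc x) = w (Suc y)" if "w x = w y" for x y
    using blocks[THEN iffD1] r2 period coprime that by (rule eq_imp_eq_Suc_if_coprime_period)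
  with min have "inj_on w {..<p}" by (rule inj_on_minimal_period)
  moreover have "t = map w [0..<p]" using t by (intro nth_equalityI) (simp_all add: p_def omega_pow_def)
  ultimately show "distinct t" by (simp add: distinct_map atLeast0LessThan)
qed

end
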